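(* For $K>K^*:=\frac{b\sigma_1}{b-\mu_0}$ let $G_3(K)=(S(K),I_1(K),0,0,R(K))$ be the unique equilibrium of the system below with $S,I_1,R>0$. Then $K\mapsto R(K)$ and $K\mapsto I_1(K)$ are strictly increasing, $K\mapsto S(K)$ is strictly decreasing, $R(K)\to0$, $I_1(K)\to0$ and $S(K)\to\sigma_1$ as $K\downarrow K^*$, and for all $K>K^*$ $$0<I_1(K)<\frac{\mu_4'-\mu_0}{\alpha_1},\qquad \frac{\mu_1-\mu_4'}{\alpha_1}<S(K)<\frac{\mu_1-\mu_0}{\alpha_1}.$$
   Context: Consider, for $t\ge0$, the system $S'=\big(b(1-\tfrac{N}{K})-\alpha_1I_1-\alpha_2I_2-(\beta_1+\beta_2+\alpha_3)I_{12}-\mu_0\big)S$, $I_1'=\big(b(1-\tfrac{N}{K})+\alpha_1S-\eta_1I_{12}-\gamma_1I_2-\mu_1\big)I_1+\beta_1SI_{12}$, $I_2'=\big(b(1-\tfrac{N}{K})+\alpha_2S-\eta_2I_{12}-\gamma_2I_1-\mu_2\big)I_2+\beta_2SI_{12}$, $I_{12}'=\big(b(1-\tfrac{N}{K})+\alpha_3S+\eta_1I_1+\eta_2I_2-\mu_3\big)I_{12}+(\gamma_1+\gamma_2)I_1I_2$, $R'=\big(b(1-\tfrac{N}{K})-\mu_4'\big)R+\rho_1I_1+\rho_2I_2+\rho_3I_{12}$, where $N=S+I_1+I_2+I_{12}+R$. All parameters $b,K,\alpha_i,\beta_i,\gamma_i,\eta_i,\rho_i,\mu_0,\mu_i'$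 are positive and $\mu_i=\rho_i+\mu_i'$ for $i=1,2,3$; $K$ is regarded as a varying parameter, the others fixed. Standing assumptions: $b>\mu_0$, $b>\mu_i$ ($i=1,2,3$), $b>\mu_4'$, and $\mu_0<\mu_4'<\mu_j'$ for $j=1,2,3$. Set $\sigma_k=(\mu_k-\mu_0)/\alpha_k$ ($k=1,2,3$), assumed to satisfy $\sigma_1<\sigma_2<\sigma_3$, and $S^{**}=\frac{K}{b}(b-\mu_0)$. *)

theory Defs
  imports "HOL-Analysis.Analysis"
begin

record params =
  p_b :: real
  p_alpha1 :: real  p_alpha2 :: real  p_alpha3 :: real
  p_beta1 :: real   p_beta2 :: real
  p_gamma1 :: real  p_gamma2 :: real
  p_eta1 :: real    p_eta2 :: real
  p_rho1 :: real    p_rho2 :: real    p_rho3 :: real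
  p_mu0 :: real
  p_mu1' :: real  p_mu2' :: real  p_mu3' :: real  p_mu4' :: real

definition mu1 :: "params \<Rightarrow> real" where "mu1 p = p_rho1 p + p_mu1' p"
definition mu2 :: "params \<Rightarrow> real" where "mu2 p = p_rho2 p + p_mu2' p"
definition mu3 :: "params \<Rightarrow> real" where "mu3 p = p_rho3 p + p_mu3' p"

definition sigma1 :: "params \<Rightarrow> real" where "sigma1 p = (mu1 p - p_mu0 p) / p_alpha1 p"
definition sigma2 :: "params \<Rightarrow> real" where "sigma2 p = (mu2 p - p_mu0 p) / p_alpha2 p"
definition sigma3 :: "params \<Rightarrow> real" where "sigma3 p = (mu3 p - p_mu0 p) / p_alpha3 p"

definition Kstar :: "params \<Rightarrow> real" where
  "Kstar p = p_b p * sigma1 p / (p_b p - p_mu0 p)"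

definition rhs :: "params \<Rightarrow> real \<Rightarrow> real \<times> real \<times> real \<times> real \<times> real
                    \<Rightarrow> real \<times> real \<times> real \<times> real \<times> real" where
  "rhs p K x = (case x of (S, I1, I2, I12, R) \<Rightarrow>
     (let N = S + I1 + I2 + I12 + R; g = p_b p * (1 - N / K) in
      ( (g - p_alpha1 p * I1 - p_alpha2 p * I2
           - (p_beta1 p + p_beta2 p + p_alpha3 p) * I12 - p_mu0 p) * S,
        (g + p_alpha1 p * S - p_eta1 p * I12 - p_gamma1 p * I2 - mu1 p) * I1 + p_beta1 p * S * I12,
        (g + p_alpha2 p * S - p_eta2 p * I12 - p_gamma2 p * I1 - mu2 p) * I2 + p_beta2 p * S * I12,
        (g + p_alpha3 p * S + p_eta1 p * I1 + p_eta2 p * I2 - mu3 p) * I12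
           + (p_gamma1 p + p_gamma2 p) * I1 * I2,
        (g - p_mu4' p) * R + p_rho1 p * I1 + p_rho2 p * I2 + p_rho3 p * I12)))"

definition equilibrium :: "params \<Rightarrow> real \<Rightarrow> real \<times> real \<times> real \<times> real \<times> real \<Rightarrow> bool" where
  "equilibrium p K x \<longleftrightarrow> rhs p K x = (0, 0, 0, 0, 0)"

definition isG3 :: "params \<Rightarrow> real \<Rightarrow> real \<times> real \<times> real \<times> real \<times> real \<Rightarrow> bool" where
  "isG3 p K x \<longleftrightarrow> equilibrium p K x \<and>
     (\<exists>S I1 R. x = (S, I1, 0, 0, R) \<and> S > 0 \<and> I1 > 0 \<and> R > 0)"

definition G3 :: "params \<Rightarrow> real \<Rightarrow> real \<times> real \<times> real \<times> real \<times> real" where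
  "G3 p K = (THE x. isG3 p K x)"

definition G3_S :: "params \<Rightarrow> real \<Rightarrow> real" where
  "G3_S p K = (case G3 p K of (S, I1, I2, I12, R) \<Rightarrow> S)"
definition G3_I1 :: "params \<Rightarrow> real \<Rightarrow> real" where
  "G3_I1 p K = (case G3 p K of (S, I1, I2, I12, R) \<Rightarrow> I1)"
definition G3_R :: "params \<Rightarrow> real \<Rightarrow> real" where
  "G3_R p K = (case G3 p K of (S, I1, I2, I12, R) \<Rightarrow> R)"

end

theory Submission
  imports Defs
begin

text \<open>
  At a \<open>G\<^sub>3\<close> equilibrium the S-equation forces the logistic factor to be
  \<open>\<alpha>\<^sub>1 I\<^sub>1 + \<mu>\<^sub>0\<close>, so the \<open>I\<^sub>1\<close>-equation gives \<open>S = \<sigma>\<^sub>1 - I\<^sub>1\<close> and the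
  R-equation gives \<open>R = \<rho>\<^sub>1 I\<^sub>1 / (\<mu>\<^sub>4' - \<mu>\<^sub>0 - \<alpha>\<^sub>1 I\<^sub>1)\<close>, which is positive only for
  \<open>I\<^sub>1 < (\<mu>\<^sub>4' - \<mu>\<^sub>0)/\<alpha>\<^sub>1\<close>. Solving the definition of \<open>N\<close> for \<open>K\<close> then expresses
  the carrying capacity as a function \<open>K = F(I\<^sub>1)\<close> which is continuous and strictly
  increasing on \<open>[0, (\<mu>\<^sub>4' - \<mu>\<^sub>0)/\<alpha>\<^sub>1)\<close>, starts at \<open>F(0) = K\<^sup>*\<close> and is unbounded.
  Hence \<open>I\<^sub>1(K) = F\<^sup>-\<^sup>1(K)\<close> exists, is unique, increases and tends to \<open>0\<close> as
  \<open>K \<down> K\<^sup>*\<close>; the behaviour of \<open>S\<close> and \<open>R\<close> is read off from their formulas in \<open>I\<^sub>1\<close>.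
\<close>

lemma strict_mono_on_right_inverse:
  fixes f :: "'a::linorder \<Rightarrow> 'b::linorder"
  assumes "strict_mono_on A f" and "\<And>y. y \<in> B \<Longrightarrow> g y \<in> A \<and> f (g y) = y"
  shows "strict_mono_on B g"
proof (rule monotone_onI)
  fix x y assume "x \<in> B" "y \<in> B" "x < y"
  then show "g x < g y"
    using strict_mono_on_less[OF assms(1), of "g x" "g y"] assms(2) by simp
qed

lemma tendsto_right_inverse_at_right:
  fixes f g :: "real \<Rightarrow> real"
  assumes mono: "strict_mono_on {a..<c} f" and "a < c"
    and inv: "\<And>y. y > f a \<Longrightarrow> g y \<in> {a<..<c} \<and> f (g y) = y"
  shows "(g \<longlongrightarrow> a) (at_right (f a))"
proof (rule order_tendstoI)
  fix l assume "l < a"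
  show "eventually (\<lambda>y. l < g y) (at_right (f a))"
    using eventually_at_right_less by (rule eventually_mono) (use inv \<open>l < a\<close> in force)
next
  fix u assume "a < u"
  define e where "e = (a + min u c) / 2"
  have e: "a < e" "e < c" "e < u" using \<open>a < u\<close> \<open>a < c\<close> by (auto simp: e_def)
  then have "f a < f e" using mono by (auto simp: monotone_on_def)
  then have "eventually (\<lambda>y. y \<in> {f a<..<f e}) (at_right (f a))"
    by (rule eventually_at_right_real)
  then show "eventually (\<lambda>y. g y < u) (at_right (f a))"
  proof (rule eventually_mono)
    fix y assume y: "y \<in> {f a<..<f e}"
    have "g y < e"
      using strict_mono_on_less[OF mono, of "g y" e] inv[of y] y e by simp
    then show "g y < u" using e by simp
  qed
qed

lemma equilibrium_G3_iff:
  "equilibrium p K (S, I, 0, 0, R) \<longleftrightarrow>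
    (let g = p_b p * (1 - (S + I + R) / K) in
     (g - p_alpha1 p * I - p_mu0 p) * S = 0 \<and> (g + p_alpha1 p * S - mu1 p) * I = 0
     \<and> (g - p_mu4' p) * R + p_rho1 p * I = 0)"
  unfolding equilibrium_def rhs_def Let_def by simp

locale G3_params =
  fixes p :: params
  assumes alpha1_pos: "0 < p_alpha1 p"
    and rho1_pos: "0 < p_rho1 p"
    and mu0_pos: "0 < p_mu0 p"
    and mu0_less_mu4': "p_mu0 p < p_mu4' p"
    and mu4'_less_b: "p_mu4' p < p_b p"
    and mu4'_less_mu1': "p_mu4' p < p_mu1' p"
begin

definition I_max :: real where
  "I_max = (p_mu4' p - p_mu0 p) / p_alpha1 p"

definition R_of :: "real \<Rightarrow> real" where
  "R_of I = p_rho1 p * I / (p_mu4' p - p_mu0 p - p_alpha1 p * I)"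

text \<open>The carrying capacity at which \<open>I\<^sub>1 = I\<close> is a \<open>G\<^sub>3\<close> equilibrium.\<close>
definition K_of :: "real \<Rightarrow> real" where
  "K_of I = p_b p * (sigma1 p + R_of I) / (p_b p - p_mu0 p - p_alpha1 p * I)"

lemma mu4'_less_mu1: "p_mu4' p < mu1 p"
  using rho1_pos mu4'_less_mu1' by (simp add: mu1_def)

lemma sigma1_pos: "0 < sigma1 p"
  using alpha1_pos mu0_less_mu4' mu4'_less_mu1 by (simp add: sigma1_def)

lemma alpha1_mult_sigma1: "p_alpha1 p * sigma1 p = mu1 p - p_mu0 p"
  using alpha1_pos by (simp add: sigma1_def)

lemma Kstar_pos: "0 < Kstar p"
  using sigma1_pos mu0_pos mu0_less_mu4' mu4'_less_b by (simp add: Kstar_def)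

lemma I_max_pos: "0 < I_max"
  using alpha1_pos mu0_less_mu4' by (simp add: I_max_def)

lemma sigma1_minus_I_max: "sigma1 p - I_max = (mu1 p - p_mu4' p) / p_alpha1 p"
  using alpha1_pos by (simp add: sigma1_def I_max_def diff_divide_distrib)

lemma less_I_max_iff: "I < I_max \<longleftrightarrow> 0 < p_mu4' p - p_mu0 p - p_alpha1 p * I"
  using alpha1_pos by (simp add: I_max_def pos_less_divide_eq mult.commute)

lemma K_of_denom_pos: "I < I_max \<Longrightarrow> 0 < p_b p - p_mu0 p - p_alpha1 p * I"
  using less_I_max_iff mu4'_less_b by simp

lemma R_of_pos: "0 < I \<Longrightarrow> I < I_max \<Longrightarrow> 0 < R_of I"
  using less_I_max_iff rho1_pos by (simp add: R_of_def)

lemma R_of_nonneg: "0 \<le> I \<Longrightarrow> I < I_max \<Longrightarrow> 0 \<le> R_of I"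
  using less_I_max_iff rho1_pos by (simp add: R_of_def)

lemma R_of_0: "R_of 0 = 0"
  by (simp add: R_of_def)

lemma K_of_0: "K_of 0 = Kstar p"
  by (simp add: K_of_def R_of_0 Kstar_def)

lemma strict_mono_on_R_of: "strict_mono_on {0..<I_max} R_of"
proof (rule monotone_onI)
  fix x y assume "x \<in> {0..<I_max}" "y \<in> {0..<I_max}" "x < y"
  then have dx: "0 < p_mu4' p - p_mu0 p - p_alpha1 p * x"
    and dy: "0 < p_mu4' p - p_mu0 p - p_alpha1 p * y" using less_I_max_iff by auto
  have "p_rho1 p * x * (p_mu4' p - p_mu0 p - p_alpha1 p * y)
        - p_rho1 p * y * (p_mu4' p - p_mu0 p - p_alpha1 p * x)
      = p_rho1 p * (p_mu4' p - p_mu0 p) * (x - y)" by (simp add: algebra_simps)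
  also have "\<dots> < 0"
    using rho1_pos mu0_less_mu4' \<open>x < y\<close> by (simp add: mult_pos_neg)
  finally show "R_of x < R_of y"
    using dx dy by (simp add: R_of_def divide_simps)
qed

lemma strict_mono_on_K_of: "strict_mono_on {0..<I_max} K_of"
proof (rule monotone_onI)
  fix x y assume x: "x \<in> {0..<I_max}" and y: "y \<in> {0..<I_max}" and "x < y"
  define Dx where "Dx = p_b p - p_mu0 p - p_alpha1 p * x"
  define Dy where "Dy = p_b p - p_mu0 p - p_alpha1 p * y"
  have "0 < Dy" using y K_of_denom_pos by (simp add: Dy_def)
  moreover have "Dy < Dx" using alpha1_pos \<open>x < y\<close> by (simp add: Dx_def Dy_def)
  moreover have "0 < sigma1 p + R_of x" using sigma1_pos R_of_nonneg x by force
  moreover have "R_of x < R_of y"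
    using strict_mono_on_less[OF strict_mono_on_R_of x y] \<open>x < y\<close> by simp
  ultimately have "(sigma1 p + R_of x) / Dx < (sigma1 p + R_of y) / Dy"
    by (intro frac_less) auto
  moreover have "0 < p_b p" using mu0_pos mu0_less_mu4' mu4'_less_b by simp
  ultimately have "p_b p * ((sigma1 p + R_of x) / Dx) < p_b p * ((sigma1 p + R_of y) / Dy)"
    by (rule mult_strict_left_mono)
  then show "K_of x < K_of y"
    by (simp add: K_of_def Dx_def Dy_def)
qed

lemma continuous_on_K_of: "continuous_on {0..<I_max} K_of"
  unfolding K_of_def[abs_def] R_of_def
  by (intro continuous_intros) (use less_I_max_iff K_of_denom_pos in force)+

text \<open>\<open>R_of\<close> is a Moebius map with explicit inverse \<open>M \<mapsto> (\<mu>\<^sub>4' - \<mu>\<^sub>0) M / (\<rho>\<^sub>1 + \<alpha>\<^sub>1 M)\<close>.\<close>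
lemma R_of_attains:
  assumes "0 \<le> M"
  obtains I where "0 \<le> I" "I < I_max" "R_of I = M"
proof -
  define d where "d = p_mu4' p - p_mu0 p"
  define I where "I = d * M / (p_rho1 p + p_alpha1 p * M)"
  define X where "X = d * p_rho1 p / (p_rho1 p + p_alpha1 p * M)"
  have den: "0 < p_rho1 p + p_alpha1 p * M"
    using rho1_pos alpha1_pos assms by (simp add: add_pos_nonneg)
  have d: "0 < d" using mu0_less_mu4' by (simp add: d_def)
  have X: "0 < X" using den d rho1_pos by (simp add: X_def)
  have denI: "d - p_alpha1 p * I = X"
    using den by (simp add: I_def X_def field_simps)
  have "R_of I = p_rho1 p * I / X"
    unfolding R_of_def d_def[symmetric] denI ..
  moreover have "p_rho1 p * I = M * X" by (simp add: I_def X_def)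
  ultimately have "R_of I = M" using X by simp
  moreover have "0 \<le> I" using den d assms by (simp add: I_def)
  moreover have "I < I_max"
    unfolding less_I_max_iff d_def[symmetric] denI by (rule X)
  ultimately show thesis using that by blast
qed

lemma K_of_attains:
  assumes "Kstar p < K"
  obtains I where "0 < I" "I < I_max" "K_of I = K"
proof -
  define M where "M = K * (p_b p - p_mu0 p) / p_b p"
  have b: "0 < p_b p - p_mu0 p" "0 < p_b p" using mu0_less_mu4' mu4'_less_b mu0_pos by auto
  have "0 \<le> M" using assms Kstar_pos b by (simp add: M_def)
  then obtain y where y: "0 \<le> y" "y < I_max" "R_of y = M" by (rule R_of_attains)
  have D: "0 < p_b p - p_mu0 p - p_alpha1 p * y" using K_of_denom_pos y(2) .
  have R: "0 \<le> R_of y" using R_of_nonneg y(1,2) .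
  have "K = p_b p * R_of y / (p_b p - p_mu0 p)" using b y by (simp add: M_def)
  also have "\<dots> \<le> p_b p * R_of y / (p_b p - p_mu0 p - p_alpha1 p * y)"
    by (rule divide_left_mono) (use b D y(1) R alpha1_pos in simp_all)
  also have "\<dots> < K_of y"
    unfolding K_of_def by (rule divide_strict_right_mono) (use b(2) sigma1_pos D in simp_all)
  finally have "K < K_of y" .
  moreover have "{0..y} \<subseteq> {0..<I_max}" using y by auto
  then have "continuous_on {0..y} K_of" by (rule continuous_on_subset[OF continuous_on_K_of])
  ultimately have "\<exists>I. 0 \<le> I \<and> I \<le> y \<and> K_of I = K"
    using K_of_0 assms y(1) by (intro IVT') simp_all
  then obtain I where I: "0 \<le> I" "I \<le> y" "K_of I = K" by blast
  have "I \<noteq> 0" using I(3) K_of_0 assms by force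
  with I y(2) show thesis by (intro that) simp_all
qed

lemma isG3_imp_K_of:
  assumes "0 < K" "isG3 p K x"
  obtains I where "0 < I" "I < I_max" "K_of I = K" "x = (sigma1 p - I, I, 0, 0, R_of I)"
proof -
  obtain S I R where x: "x = (S, I, 0, 0, R)" "0 < S" "0 < I" "0 < R"
    and e: "equilibrium p K (S, I, 0, 0, R)" using assms(2) unfolding isG3_def by blast
  define g where "g = p_b p * (1 - (S + I + R) / K)"
  have eq_S: "(g - p_alpha1 p * I - p_mu0 p) * S = 0"
    and eq_I1: "(g + p_alpha1 p * S - mu1 p) * I = 0"
    and eq_R: "(g - p_mu4' p) * R + p_rho1 p * I = 0"
    using e unfolding equilibrium_G3_iff Let_def g_def by auto
  have g: "g = p_alpha1 p * I + p_mu0 p" using eq_S x by simp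
  have "g + p_alpha1 p * S = mu1 p" using eq_I1 x by simp
  then have S: "S = sigma1 p - I" using g alpha1_pos by (simp add: sigma1_def field_simps)
  have R_eq: "(p_mu4' p - p_mu0 p - p_alpha1 p * I) * R = p_rho1 p * I"
    using eq_R g by (simp add: algebra_simps)
  moreover have "0 < p_rho1 p * I" using x rho1_pos by simp
  ultimately have "0 < p_mu4' p - p_mu0 p - p_alpha1 p * I"
    using x(4) by (metis zero_less_mult_pos2)
  then have "I < I_max" by (simp add: less_I_max_iff)
  then have R: "R = R_of I"
    using R_eq less_I_max_iff by (simp add: R_of_def field_simps)
  have "p_b p * (S + I + R) / K = p_b p - p_mu0 p - p_alpha1 p * I"
    using g by (simp add: g_def algebra_simps)
  then have "K_of I = K"
    using assms(1) K_of_denom_pos[OF \<open>I < I_max\<close>] by (simp add: K_of_def S R field_simps)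
  with that x S R \<open>I < I_max\<close> show thesis by blast
qed

lemma K_of_imp_isG3:
  assumes "0 < I" "I < I_max" "K_of I = K"
  shows "isG3 p K (sigma1 p - I, I, 0, 0, R_of I)"
proof -
  have D: "0 < p_b p - p_mu0 p - p_alpha1 p * I" using K_of_denom_pos assms(2) .
  have N: "0 < sigma1 p + R_of I" using sigma1_pos R_of_pos assms by force
  have b: "0 < p_b p" using mu0_pos mu0_less_mu4' mu4'_less_b by simp
  have "(sigma1 p - I + I + R_of I) / K = (p_b p - p_mu0 p - p_alpha1 p * I) / p_b p"
    using D N b by (simp flip: assms(3) add: K_of_def)
  then have g: "p_b p * (1 - (sigma1 p - I + I + R_of I) / K) = p_alpha1 p * I + p_mu0 p"
    using b by (simp add: field_simps)
  have "I_max < sigma1 p"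
    using alpha1_pos mu4'_less_mu1 by (simp add: I_max_def sigma1_def divide_strict_right_mono)
  then have "0 < sigma1 p - I" using assms(2) by simp
  moreover have "p_alpha1 p * I + p_mu0 p + p_alpha1 p * (sigma1 p - I) - mu1 p = 0"
    using alpha1_mult_sigma1 by (simp add: right_diff_distrib)
  moreover have "(p_alpha1 p * I + p_mu0 p - p_mu4' p) * R_of I + p_rho1 p * I = 0"
    using less_I_max_iff assms(2) by (simp add: R_of_def field_simps)
  ultimately show ?thesis
    using assms R_of_pos unfolding isG3_def equilibrium_G3_iff Let_def g by auto
qed

lemma G3_components:
  assumes "Kstar p < K"
  shows "\<exists>!x. isG3 p K x" "G3_I1 p K \<in> {0<..<I_max}" "K_of (G3_I1 p K) = K"
    "G3_S p K = sigma1 p - G3_I1 p K" "G3_R p K = R_of (G3_I1 p K)"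
proof -
  have K: "0 < K" using Kstar_pos assms by simp
  obtain I where I: "0 < I" "I < I_max" "K_of I = K" using K_of_attains assms .
  let ?x = "(sigma1 p - I, I, 0::real, 0::real, R_of I)"
  have unique: "z = ?x" if z: "isG3 p K z" for z
  proof -
    obtain J where J: "0 < J" "J < I_max" "K_of J = K" "z = (sigma1 p - J, J, 0, 0, R_of J)"
      using isG3_imp_K_of[OF K z] .
    have "J = I"
      by (rule strict_mono_on_eqD[OF strict_mono_on_K_of]) (use I J in auto)
    with J show ?thesis by simp
  qed
  have "isG3 p K ?x" using K_of_imp_isG3 I .
  then show "\<exists>!x. isG3 p K x" using unique by (rule ex1I)
  have "G3 p K = ?x" unfolding G3_def using \<open>isG3 p K ?x\<close> unique by (rule the_equality)
  then show "G3_I1 p K \<in> {0<..<I_max}" "K_of (G3_I1 p K) = K"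
    "G3_S p K = sigma1 p - G3_I1 p K" "G3_R p K = R_of (G3_I1 p K)"
    using I by (simp_all add: G3_I1_def G3_S_def G3_R_def)
qed

lemma strict_mono_on_G3_I1: "strict_mono_on {Kstar p<..} (G3_I1 p)"
proof (rule strict_mono_on_right_inverse[OF strict_mono_on_K_of])
  fix K assume "K \<in> {Kstar p<..}"
  then show "G3_I1 p K \<in> {0..<I_max} \<and> K_of (G3_I1 p K) = K"
    using G3_components(2,3)[of K] by simp
qed

lemma G3_I1_tendsto: "(G3_I1 p \<longlongrightarrow> 0) (at_right (Kstar p))"
proof -
  have "(G3_I1 p \<longlongrightarrow> 0) (at_right (K_of 0))"
  proof (rule tendsto_right_inverse_at_right[OF strict_mono_on_K_of I_max_pos])
    fix K assume "K_of 0 < K"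
    then show "G3_I1 p K \<in> {0<..<I_max} \<and> K_of (G3_I1 p K) = K"
      using G3_components(2,3)[of K] by (simp add: K_of_0)
  qed
  then show ?thesis by (simp only: K_of_0)
qed

lemma strict_mono_on_G3_R: "strict_mono_on {Kstar p<..} (G3_R p)"
proof (rule monotone_onI)
  fix K L assume "K \<in> {Kstar p<..}" "L \<in> {Kstar p<..}" "K < L"
  moreover have "G3_I1 p K < G3_I1 p L"
    using strict_mono_onD[OF strict_mono_on_G3_I1] calculation by blast
  moreover have "G3_I1 p K \<in> {0..<I_max}" "G3_I1 p L \<in> {0..<I_max}"
    using G3_components(2)[of K] G3_components(2)[of L] calculation by auto
  ultimately show "G3_R p K < G3_R p L"
    by (simp add: G3_components(5) strict_mono_on_less[OF strict_mono_on_R_of])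
qed

lemma strict_antimono_on_G3_S: "strict_antimono_on {Kstar p<..} (G3_S p)"
proof (rule monotone_onI)
  fix K L assume "K \<in> {Kstar p<..}" "L \<in> {Kstar p<..}" "K < L"
  moreover have "G3_I1 p K < G3_I1 p L"
    using strict_mono_onD[OF strict_mono_on_G3_I1] calculation by blast
  ultimately show "G3_S p L < G3_S p K"
    using G3_components(4) by simp
qed

lemma G3_R_tendsto: "(G3_R p \<longlongrightarrow> 0) (at_right (Kstar p))"
proof -
  have "isCont R_of 0"
    unfolding R_of_def using mu0_less_mu4' by (intro continuous_intros) simp
  from isCont_tendsto_compose[OF this G3_I1_tendsto]
  have "((\<lambda>K. R_of (G3_I1 p K)) \<longlongrightarrow> 0) (at_right (Kstar p))"
    by (simp add: R_of_0)
  moreover have "eventually (\<lambda>K. R_of (G3_I1 p K) = G3_R p K) (at_right (Kstar p))"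
    using eventually_at_right_less by (rule eventually_mono) (simp add: G3_components(5))
  ultimately show ?thesis by (rule Lim_transform_eventually)
qed

lemma G3_S_tendsto: "(G3_S p \<longlongrightarrow> sigma1 p) (at_right (Kstar p))"
proof -
  have "((\<lambda>K. sigma1 p - G3_I1 p K) \<longlongrightarrow> sigma1 p - 0) (at_right (Kstar p))"
    by (intro tendsto_intros G3_I1_tendsto)
  moreover have "eventually (\<lambda>K. sigma1 p - G3_I1 p K = G3_S p K) (at_right (Kstar p))"
    using eventually_at_right_less by (rule eventually_mono) (simp add: G3_components(4))
  ultimately show ?thesis by simp (rule Lim_transform_eventually)
qed

lemma G3_bounds:
  assumes "Kstar p < K"
  shows "0 < G3_I1 p K" "G3_I1 p K < (p_mu4' p - p_mu0 p) / p_alpha1 p"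
    "(mu1 p - p_mu4' p) / p_alpha1 p < G3_S p K" "G3_S p K < (mu1 p - p_mu0 p) / p_alpha1 p"
proof -
  note G = G3_components[OF assms]
  show "0 < G3_I1 p K" using G(2) by simp
  show "G3_I1 p K < (p_mu4' p - p_mu0 p) / p_alpha1 p"
    unfolding I_max_def[symmetric] using G(2) by simp
  show "(mu1 p - p_mu4' p) / p_alpha1 p < G3_S p K"
    unfolding sigma1_minus_I_max[symmetric] using G(2,4) by simp
  show "G3_S p K < (mu1 p - p_mu0 p) / p_alpha1 p"
    unfolding sigma1_def[symmetric] using G(2,4) by simp
qed

end

theorem mainTheorem9:
  fixes p :: params
  assumes pos: "p_b p > 0" "p_alpha1 p > 0" "p_alpha2 p > 0" "p_alpha3 p > 0"
      "p_beta1 p > 0" "p_beta2 p > 0" "p_gamma1 p > 0" "p_gamma2 p > 0"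
      "p_eta1 p > 0" "p_eta2 p > 0" "p_rho1 p > 0" "p_rho2 p > 0" "p_rho3 p > 0"
      "p_mu0 p > 0" "p_mu1' p > 0" "p_mu2' p > 0" "p_mu3' p > 0" "p_mu4' p > 0"
    and b_gt: "p_b p > p_mu0 p" "p_b p > mu1 p" "p_b p > mu2 p" "p_b p > mu3 p"
      "p_b p > p_mu4' p"
    and mu_ord: "p_mu0 p < p_mu4' p" "p_mu4' p < p_mu1' p" "p_mu4' p < p_mu2' p"
      "p_mu4' p < p_mu3' p"
    and sig: "sigma1 p < sigma2 p" "sigma2 p < sigma3 p"
  shows "(\<forall>K > Kstar p. \<exists>!x. isG3 p K x)
    \<and> strict_mono_on {Kstar p<..} (G3_R p)
    \<and> strict_mono_on {Kstar p<..} (G3_I1 p)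
    \<and> strict_antimono_on {Kstar p<..} (G3_S p)
    \<and> (G3_R p \<longlongrightarrow> 0) (at_right (Kstar p))
    \<and> (G3_I1 p \<longlongrightarrow> 0) (at_right (Kstar p))
    \<and> (G3_S p \<longlongrightarrow> sigma1 p) (at_right (Kstar p))
    \<and> (\<forall>K > Kstar p. 0 < G3_I1 p K \<and> G3_I1 p K < (p_mu4' p - p_mu0 p) / p_alpha1 p
        \<and> (mu1 p - p_mu4' p) / p_alpha1 p < G3_S p K
        \<and> G3_S p K < (mu1 p - p_mu0 p) / p_alpha1 p)"
proof -
  \<comment> \<open>Only strain 1 and the recovered class enter \<open>G\<^sub>3\<close>.\<close>
  interpret G3_params p
    using pos b_gt mu_ord by unfold_locales auto
  have "\<forall>K > Kstar p. \<exists>!x. isG3 p K x" using G3_components(1) by blast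
  moreover have "\<forall>K > Kstar p. 0 < G3_I1 p K \<and> G3_I1 p K < (p_mu4' p - p_mu0 p) / p_alpha1 p
      \<and> (mu1 p - p_mu4' p) / p_alpha1 p < G3_S p K \<and> G3_S p K < (mu1 p - p_mu0 p) / p_alpha1 p"
    using G3_bounds by blast
  ultimately show ?thesis
    using strict_mono_on_G3_R strict_mono_on_G3_I1 strict_antimono_on_G3_S
      G3_R_tendsto G3_I1_tendsto G3_S_tendsto by simp
qed

end
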